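(* Let $\mathcal{M}$ be an $\mathbb{A}$-submodule of $\mathbb{A}^K$, $a_1,\dots,a_K\in\mathbb{Z}^n$ and $I,J\subseteq\{1,\dots,K\}$. Suppose that for every $v\in\mathbb{R}^n\setminus\{0\}$ there exists $\boldsymbol f_v\in\mathcal{M}$ with $\mathrm{in}_v(\boldsymbol f_v)\in(\mathbb{A}^+)^K$ and such that, writing $I'=M_v(I,\boldsymbol f_v)$ and $J'=O_v\cup J$, $(O_w\cup J')\cap M_w(I',\mathrm{in}_v(\boldsymbol f_v))\ne\emptyset$ for all $w\in\mathbb{R}^n\setminus\{0\}$. Then there exists $\boldsymbol f\in\mathcal{M}$ such that (i) $\mathrm{in}_v(\boldsymbol f)\in(\mathbb{A}^+)^K$ for all $v\in\mathbb{R}^n\setminus\{0\}$, and (ii) $(O_v\cup J)\cap M_v(I,\boldsymbol f)\ne\emptyset$ for all $v\in\mathbb{R}^n\setminus\{0\}$.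
   Context: $\mathbb{A}=\mathbb{R}[X_1^{\pm1},\dots,X_n^{\pm1}]$, $\mathbb{A}^+=\mathbb{R}_{\ge0}[X_1^{\pm1},\dots,X_n^{\pm1}]\setminus\{0\}$. For $f=\sum c_bX^b\ne0$: $\deg_v(f)=\max\{v\cdot b:c_b\neq0\}$, $\deg_v(0)=-\infty$, $\mathrm{in}_v(f)=\sum_{v\cdot b=\deg_v f}c_bX^b$, componentwise on vectors. $M_v(I,\boldsymbol f)=\{i\in I:\deg_v(f_i)=\max_{i'\in I}\deg_v(f_{i'})\}$; $O_v=\{i:a_i\not\perp v\}$. *)

theory Defs
  imports "HOL-Analysis.Analysis" "HOL-Library.Poly_Mapping" "HOL-Library.Extended_Real"
begin

text \<open>Multiplication is the
  convolution product, so this is the ring A = R[X_1^{+-1},...,X_n^{+-1}].\<close>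
type_synonym 'n laurent = "(int ^ 'n) \<Rightarrow>\<^sub>0 real"

definition expvec :: "int ^ 'n \<Rightarrow> real ^ 'n" where
  "expvec b = (\<chi> i. real_of_int (b $ i))"

definition ldeg :: "real ^ 'n::finite \<Rightarrow> 'n laurent \<Rightarrow> ereal" where
  "ldeg v f = (if f = 0 then -\<infinity>
     else ereal (Max ((\<lambda>b. v \<bullet> expvec b) ` Poly_Mapping.keys f)))"

definition linit :: "real ^ 'n::finite \<Rightarrow> 'n laurent \<Rightarrow> 'n laurent" where
  "linit v f = Abs_poly_mapping
     (\<lambda>b. if ereal (v \<bullet> expvec b) = ldeg v f then Poly_Mapping.lookup f b else 0)"

definition linitv :: "real ^ 'n::finite \<Rightarrow> ('k \<Rightarrow> 'n laurent) \<Rightarrow> ('k \<Rightarrow> 'n laurent)" where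
  "linitv v f = (\<lambda>i. linit v (f i))"

definition Aplus :: "'n laurent set" where
  "Aplus = {f. f \<noteq> 0 \<and> (\<forall>b. Poly_Mapping.lookup f b \<ge> 0)}"

definition Mset :: "real ^ 'n::finite \<Rightarrow> 'k set \<Rightarrow> ('k \<Rightarrow> 'n laurent) \<Rightarrow> 'k set" where
  "Mset v I f = {i \<in> I. ldeg v (f i) = Max ((\<lambda>i'. ldeg v (f i')) ` I)}"

definition Oset :: "('k \<Rightarrow> int ^ 'n::finite) \<Rightarrow> real ^ 'n \<Rightarrow> 'k set" where
  "Oset a v = {i. expvec (a i) \<bullet> v \<noteq> 0}"

definition is_submodule :: "('k \<Rightarrow> ('n::finite) laurent) set \<Rightarrow> bool" where
  "is_submodule M \<longleftrightarrow> (\<lambda>_. 0) \<in> M \<and>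
     (\<forall>f\<in>M. \<forall>g\<in>M. (\<lambda>i. f i + g i) \<in> M) \<and>
     (\<forall>c. \<forall>f\<in>M. (\<lambda>i. c * f i) \<in> M)"

end

theory Submission
  imports Defs
begin

text \<open>For each direction v the hypothesis provides a module element that is admissible in a
  whole cone around v: a direction u close to v refines the v-order on the finitely many exponents involved,
  so taking initial forms first with respect to v and then u is the same as taking them with
  respect to u. By compactness of the sphere finitely many such elements cover all directions.
  They are glued as f = \<Sum>p. X^p f_v(p), where p runs over the lattice points of a thin annulus
  of large radius and v(p) is a cover point near the direction of p. For a direction u the shift
  X^p dominates the bounded degrees of the f_v, so only lattice points p pointing almost along u
  contribute to in_u(f); their summands are admissible at u and their top coefficients, being positive,
  cannot cancel.\<close>

section \<open>Real degrees and positive initial forms\<close>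

text \<open>The degree deg_u as a real number; the value at the zero polynomial is the junk Max {}.\<close>
definition rdeg :: "real ^ 'n::finite \<Rightarrow> 'n laurent \<Rightarrow> real" where
  "rdeg u g = Max ((\<lambda>b. u \<bullet> expvec b) ` Poly_Mapping.keys g)"

definition initial_pos :: "real ^ 'n::finite \<Rightarrow> 'n laurent \<Rightarrow> bool" where
  "initial_pos u g \<longleftrightarrow> g \<noteq> 0 \<and>
     (\<forall>b\<in>Poly_Mapping.keys g. u \<bullet> expvec b = rdeg u g \<longrightarrow> 0 < Poly_Mapping.lookup g b)"

lemma rdeg_ge: "b \<in> Poly_Mapping.keys g \<Longrightarrow> u \<bullet> expvec b \<le> rdeg u g"
  unfolding rdeg_def by (rule Max_ge) auto

lemma rdeg_attained:
  assumes "g \<noteq> 0"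
  obtains b where "b \<in> Poly_Mapping.keys g" "u \<bullet> expvec b = rdeg u g"
proof -
  have "rdeg u g \<in> (\<lambda>b. u \<bullet> expvec b) ` Poly_Mapping.keys g"
    unfolding rdeg_def using assms by (intro Max_in) auto
  then show ?thesis using that by auto
qed

lemma rdeg_eqI:
  assumes "b \<in> Poly_Mapping.keys g" "u \<bullet> expvec b = c"
    and "\<And>b'. b' \<in> Poly_Mapping.keys g \<Longrightarrow> u \<bullet> expvec b' \<le> c"
  shows "rdeg u g = c"
  unfolding rdeg_def by (rule Max_eqI) (use assms in auto)

lemma abs_rdeg_le:
  assumes "g \<noteq> 0" "\<And>b. b \<in> Poly_Mapping.keys g \<Longrightarrow> norm (expvec b) \<le> C"
  shows "\<bar>rdeg u g\<bar> \<le> norm u * C"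
proof -
  obtain b where b: "b \<in> Poly_Mapping.keys g" "u \<bullet> expvec b = rdeg u g"
    using rdeg_attained[OF assms(1)] .
  have "\<bar>u \<bullet> expvec b\<bar> \<le> norm u * norm (expvec b)" by (rule Cauchy_Schwarz_ineq2)
  also have "\<dots> \<le> norm u * C" using assms(2)[OF b(1)] by (intro mult_left_mono) auto
  finally show ?thesis using b(2) by simp
qed

lemma ldeg_eq_rdeg: "g \<noteq> 0 \<Longrightarrow> ldeg u g = ereal (rdeg u g)"
  by (simp add: ldeg_def rdeg_def)

lemma lookup_linit:
  "Poly_Mapping.lookup (linit u g) b =
     (if g \<noteq> 0 \<and> u \<bullet> expvec b = rdeg u g then Poly_Mapping.lookup g b else 0)"
proof -
  let ?h = "\<lambda>b. if ereal (u \<bullet> expvec b) = ldeg u g then Poly_Mapping.lookup g b else 0"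
  have "finite {b. ?h b \<noteq> 0}"
    by (rule finite_subset[of _ "Poly_Mapping.keys g"]) (auto simp: in_keys_iff split: if_splits)
  then have "Poly_Mapping.lookup (linit u g) = ?h" unfolding linit_def by simp
  then show ?thesis by (cases "g = 0") (auto simp: ldeg_def rdeg_def)
qed

lemma keys_linit:
  "g \<noteq> 0 \<Longrightarrow> Poly_Mapping.keys (linit u g) =
     {b \<in> Poly_Mapping.keys g. u \<bullet> expvec b = rdeg u g}"
  by (auto simp: in_keys_iff lookup_linit split: if_splits)

lemma linit_in_Aplus_iff: "linit u g \<in> Aplus \<longleftrightarrow> initial_pos u g"
proof (cases "g = 0")
  case True
  then have "linit u g = 0" by (intro poly_mapping_eqI) (simp add: lookup_linit)
  with True show ?thesis by (simp add: Aplus_def initial_pos_def)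
next
  case False
  obtain b where b: "b \<in> Poly_Mapping.keys g" "u \<bullet> expvec b = rdeg u g"
    using rdeg_attained[OF False] .
  have "linit u g \<noteq> 0 \<longleftrightarrow> Poly_Mapping.keys (linit u g) \<noteq> {}" by simp
  also have "\<dots>" using False b by (auto simp: keys_linit)
  finally have "linit u g \<noteq> 0" .
  moreover have "(\<forall>c. 0 \<le> Poly_Mapping.lookup (linit u g) c) \<longleftrightarrow>
      (\<forall>c\<in>Poly_Mapping.keys g. u \<bullet> expvec c = rdeg u g \<longrightarrow> 0 < Poly_Mapping.lookup g c)"
    using False by (auto simp: lookup_linit in_keys_iff order.order_iff_strict)
  ultimately show ?thesis using False by (simp add: Aplus_def initial_pos_def)
qed

section \<open>Maximizers\<close>

definition maximizers :: "('k \<Rightarrow> real) \<Rightarrow> 'k set \<Rightarrow> 'k set" where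
  "maximizers \<phi> I = {i \<in> I. \<phi> i = Max (\<phi> ` I)}"

lemma mem_maximizers_iff:
  "finite I \<Longrightarrow> i \<in> maximizers \<phi> I \<longleftrightarrow> i \<in> I \<and> (\<forall>j\<in>I. \<phi> j \<le> \<phi> i)"
  by (auto simp: maximizers_def intro!: Max_eqI[symmetric])

lemma maximizers_nonempty: "finite I \<Longrightarrow> I \<noteq> {} \<Longrightarrow> maximizers \<phi> I \<noteq> {}"
  unfolding maximizers_def using Max_in[of "\<phi> ` I"] by fastforce

lemma maximizers_maximizers:
  assumes "finite I" and refine: "\<And>i j. i \<in> I \<Longrightarrow> j \<in> I \<Longrightarrow> \<alpha> i < \<alpha> j \<Longrightarrow> \<beta> i < \<beta> j"
  shows "maximizers \<beta> (maximizers \<alpha> I) = maximizers \<beta> I"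
proof -
  define A where "A = maximizers \<alpha> I"
  have A: "finite A" "A \<subseteq> I" using assms(1) by (auto simp: A_def maximizers_def)
  have sub: "maximizers \<beta> I \<subseteq> A"
  proof
    fix i assume i: "i \<in> maximizers \<beta> I"
    show "i \<in> A"
    proof (rule ccontr)
      assume "i \<notin> A"
      obtain j where "j \<in> A" using maximizers_nonempty[OF assms(1)] i
        by (auto simp: A_def maximizers_def)
      with \<open>i \<notin> A\<close> i have "\<alpha> i < \<alpha> j" "i \<in> I" "j \<in> I"
        by (auto simp: A_def mem_maximizers_iff[OF assms(1)])
      with i refine show False by (force simp: mem_maximizers_iff[OF assms(1)])
    qed
  qed
  show ?thesis
  proof (intro set_eqI iffI)
    fix i assume "i \<in> maximizers \<beta> I"
    then show "i \<in> maximizers \<beta> (maximizers \<alpha> I)"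
      using sub A by (auto simp: A_def[symmetric] mem_maximizers_iff assms(1))
  next
    fix i assume i: "i \<in> maximizers \<beta> (maximizers \<alpha> I)"
    then have "i \<in> I" using A by (auto simp: A_def[symmetric] mem_maximizers_iff)
    then obtain k where k: "k \<in> maximizers \<beta> I"
      using maximizers_nonempty[OF assms(1)] by blast
    then have "\<beta> k \<le> \<beta> i" using i sub A by (auto simp: A_def[symmetric] mem_maximizers_iff)
    with k \<open>i \<in> I\<close> show "i \<in> maximizers \<beta> I"
      using assms(1) by (force simp: mem_maximizers_iff)
  qed
qed

lemma Mset_eq_maximizers:
  fixes f :: "'k::finite \<Rightarrow> 'n::finite laurent"
  assumes "\<forall>i\<in>I. f i \<noteq> 0"
  shows "Mset u I f = maximizers (\<lambda>i. rdeg u (f i)) I"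
proof (cases "I = {}")
  case False
  have "(\<lambda>i. ldeg u (f i)) ` I = ereal ` (\<lambda>i. rdeg u (f i)) ` I"
    using assms by (auto simp: ldeg_eq_rdeg image_image)
  moreover have "Max (ereal ` (\<lambda>i. rdeg u (f i)) ` I) = ereal (Max ((\<lambda>i. rdeg u (f i)) ` I))"
    using False by (intro mono_Max_commute[symmetric]) (auto simp: mono_def)
  ultimately show ?thesis using assms by (auto simp: Mset_def maximizers_def ldeg_eq_rdeg)
qed (simp add: Mset_def maximizers_def)

definition admissible ::
    "'k set \<Rightarrow> 'k set \<Rightarrow> ('k \<Rightarrow> int ^ 'n) \<Rightarrow> ('k::finite \<Rightarrow> 'n::finite laurent) \<Rightarrow> real ^ 'n \<Rightarrow> bool" where
  "admissible I J a f u \<longleftrightarrow> (\<forall>i. initial_pos u (f i)) \<and>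
     (Oset a u \<union> J) \<inter> maximizers (\<lambda>i. rdeg u (f i)) I \<noteq> {}"

lemma linitv_in_Aplus_iff: "linitv u f i \<in> Aplus \<longleftrightarrow> initial_pos u (f i)"
  by (simp add: linitv_def linit_in_Aplus_iff)

lemma admissible_iff:
  "admissible I J a f u \<longleftrightarrow>
     (\<forall>i. linitv u f i \<in> Aplus) \<and> (Oset a u \<union> J) \<inter> Mset u I f \<noteq> {}"
proof -
  have "(\<forall>i. initial_pos u (f i)) \<Longrightarrow> Mset u I f = maximizers (\<lambda>i. rdeg u (f i)) I"
    by (rule Mset_eq_maximizers) (simp add: initial_pos_def)
  then show ?thesis by (auto simp: admissible_def linitv_in_Aplus_iff)
qed

section \<open>Admissibility near a direction\<close>

definition preserves_order :: "real ^ 'n::finite \<Rightarrow> real ^ 'n \<Rightarrow> (int ^ 'n) set \<Rightarrow> bool" where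
  "preserves_order v u K \<longleftrightarrow>
     (\<forall>b\<in>K. \<forall>b'\<in>K. v \<bullet> expvec b < v \<bullet> expvec b' \<longrightarrow> u \<bullet> expvec b < u \<bullet> expvec b')"

lemma preserves_order_scaleR:
  "preserves_order v u K \<Longrightarrow> 0 < t \<Longrightarrow> preserves_order v (t *\<^sub>R u) K"
  by (simp add: preserves_order_def inner_scaleR_left)

lemma Oset_scaleR: "t \<noteq> 0 \<Longrightarrow> Oset a (t *\<^sub>R u) = Oset a u"
  by (simp add: Oset_def inner_scaleR_right)

lemma eventually_preserves_order:
  assumes "finite K"
  shows "eventually (\<lambda>u. preserves_order v u K) (nhds v)"
  unfolding preserves_order_def
proof (intro eventually_ball_finite assms ballI)
  fix b b' assume "b \<in> K" "b' \<in> K"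
  show "eventually (\<lambda>u. v \<bullet> expvec b < v \<bullet> expvec b' \<longrightarrow> u \<bullet> expvec b < u \<bullet> expvec b') (nhds v)"
  proof (cases "v \<bullet> expvec b < v \<bullet> expvec b'")
    case True
    have "((\<lambda>u. u \<bullet> expvec b' - u \<bullet> expvec b) \<longlongrightarrow> v \<bullet> expvec b' - v \<bullet> expvec b) (nhds v)"
      by (intro tendsto_intros filterlim_ident)
    from order_tendstoD(1)[OF this, of 0] True
    have "eventually (\<lambda>u. 0 < u \<bullet> expvec b' - u \<bullet> expvec b) (nhds v)" by simp
    then show ?thesis by eventually_elim simp
  qed simp
qed

lemma eventually_Oset_subset:
  fixes a :: "'k::finite \<Rightarrow> int ^ 'n::finite"
  shows "eventually (\<lambda>u. Oset a v \<subseteq> Oset a u) (nhds v)"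
proof -
  have "eventually (\<lambda>u. expvec (a i) \<bullet> v \<noteq> 0 \<longrightarrow> expvec (a i) \<bullet> u \<noteq> 0) (nhds v)" for i
  proof (cases "expvec (a i) \<bullet> v = 0")
    case False
    have "((\<lambda>u. expvec (a i) \<bullet> u) \<longlongrightarrow> expvec (a i) \<bullet> v) (nhds v)"
      by (intro tendsto_intros filterlim_ident)
    from tendsto_imp_eventually_ne[OF this False] show ?thesis by eventually_elim simp
  qed simp
  then have "eventually (\<lambda>u. \<forall>i. expvec (a i) \<bullet> v \<noteq> 0 \<longrightarrow> expvec (a i) \<bullet> u \<noteq> 0) (nhds v)"
    by (intro eventually_all_finite) blast
  then show ?thesis by eventually_elim (auto simp: Oset_def)
qed

context
  fixes u v :: "real ^ 'n::finite" and K :: "(int ^ 'n) set"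
  assumes order: "preserves_order v u K"
begin

lemma less_rdeg_preserved:
  assumes "b \<in> K" "h \<noteq> 0" "Poly_Mapping.keys h \<subseteq> K" "v \<bullet> expvec b < rdeg v h"
  shows "u \<bullet> expvec b < rdeg u h"
proof -
  obtain b' where b': "b' \<in> Poly_Mapping.keys h" "v \<bullet> expvec b' = rdeg v h"
    using rdeg_attained[OF assms(2)] .
  then have "u \<bullet> expvec b < u \<bullet> expvec b'"
    using order assms by (auto simp: preserves_order_def)
  with rdeg_ge[OF b'(1), of u] show ?thesis by linarith
qed

lemma top_key_preserved:
  assumes "Poly_Mapping.keys g \<subseteq> K" "b \<in> Poly_Mapping.keys g" "u \<bullet> expvec b = rdeg u g"
  shows "v \<bullet> expvec b = rdeg v g"
  using less_rdeg_preserved[of b g] rdeg_ge[OF assms(2), of v] assms by fastforce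

lemma initial_pos_preserved:
  "initial_pos v g \<Longrightarrow> Poly_Mapping.keys g \<subseteq> K \<Longrightarrow> initial_pos u g"
  using top_key_preserved unfolding initial_pos_def by blast

lemma rdeg_linit_preserved:
  assumes "g \<noteq> 0" "Poly_Mapping.keys g \<subseteq> K"
  shows "rdeg u (linit v g) = rdeg u g"
proof -
  obtain b where "b \<in> Poly_Mapping.keys g" "u \<bullet> expvec b = rdeg u g"
    using rdeg_attained[OF assms(1)] .
  then show ?thesis
    using assms top_key_preserved by (intro rdeg_eqI[of b]) (auto simp: keys_linit rdeg_ge)
qed

lemma rdeg_less_preserved:
  assumes "g \<noteq> 0" "h \<noteq> 0" "Poly_Mapping.keys g \<subseteq> K" "Poly_Mapping.keys h \<subseteq> K"
    and "rdeg v g < rdeg v h"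
  shows "rdeg u g < rdeg u h"
proof -
  obtain b where "b \<in> Poly_Mapping.keys g" "u \<bullet> expvec b = rdeg u g"
    using rdeg_attained[OF assms(1)] .
  with rdeg_ge[of b g v] less_rdeg_preserved[of b h] assms show ?thesis by fastforce
qed

end

lemma admissible_if_preserves_order:
  fixes f :: "'k::finite \<Rightarrow> 'n::finite laurent"
  assumes pos: "\<forall>i. initial_pos v (f i)"
    and hyp: "(Oset a u \<union> (Oset a v \<union> J)) \<inter> Mset u (Mset v I f) (linitv v f) \<noteq> {}"
    and order: "preserves_order v u (\<Union>i. Poly_Mapping.keys (f i))"
    and Osub: "Oset a v \<subseteq> Oset a u"
  shows "admissible I J a f u"
proof -
  have f0: "f i \<noteq> 0" and linit0: "linitv v f i \<noteq> 0" for i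
    using pos[rule_format, of i] linit_in_Aplus_iff[of v "f i"]
    by (auto simp: initial_pos_def Aplus_def linitv_def)
  have keys: "Poly_Mapping.keys (f i) \<subseteq> (\<Union>i. Poly_Mapping.keys (f i))" for i by blast
  have "Mset u (Mset v I f) (linitv v f) =
      maximizers (\<lambda>i. rdeg u (f i)) (maximizers (\<lambda>i. rdeg v (f i)) I)"
    using linit0 f0 rdeg_linit_preserved[OF order _ keys]
    by (simp add: Mset_eq_maximizers linitv_def)
  also have "\<dots> = maximizers (\<lambda>i. rdeg u (f i)) I"
    using rdeg_less_preserved[OF order f0 f0 keys keys] by (intro maximizers_maximizers) auto
  finally show ?thesis
    using hyp Osub pos initial_pos_preserved[OF order _ keys] by (auto simp: admissible_def)
qed

lemma admissible_near:
  fixes f :: "'k::finite \<Rightarrow> 'n::finite laurent"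
  assumes "\<forall>i. initial_pos v (f i)"
    and "\<forall>w. w \<noteq> 0 \<longrightarrow> (Oset a w \<union> (Oset a v \<union> J)) \<inter> Mset w (Mset v I f) (linitv v f) \<noteq> {}"
    and "v \<noteq> 0"
  shows "\<exists>\<epsilon>>0. \<forall>y t. dist y v < \<epsilon> \<longrightarrow> 0 < t \<longrightarrow> admissible I J a f (t *\<^sub>R y)"
proof -
  let ?K = "\<Union>i. Poly_Mapping.keys (f i)"
  have "finite ?K" by simp
  have "eventually (\<lambda>y. y \<noteq> 0 \<and> preserves_order v y ?K \<and> Oset a v \<subseteq> Oset a y) (nhds v)"
    using tendsto_imp_eventually_ne[OF filterlim_ident assms(3)]
      eventually_preserves_order[OF \<open>finite ?K\<close>, of v] eventually_Oset_subset[of a v]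
    by eventually_elim auto
  then obtain \<epsilon> where "\<epsilon> > 0" and \<epsilon>: "\<And>y. dist y v < \<epsilon> \<Longrightarrow>
      y \<noteq> 0 \<and> preserves_order v y ?K \<and> Oset a v \<subseteq> Oset a y"
    unfolding eventually_nhds_metric by blast
  moreover have "admissible I J a f (t *\<^sub>R y)" if "dist y v < \<epsilon>" "0 < t" for y t
    using \<epsilon>[OF that(1)] that(2) assms(1) assms(2)[rule_format, of "t *\<^sub>R y"]
    by (intro admissible_if_preserves_order) (auto simp: preserves_order_scaleR Oset_scaleR)
  ultimately show ?thesis by blast
qed

section \<open>Sums of shifted polynomials\<close>

lemma lookup_single_one_mult:
  fixes p :: "'a::ab_group_add" and g :: "'a \<Rightarrow>\<^sub>0 'b::semiring_1"
  shows "Poly_Mapping.lookup (Poly_Mapping.single p 1 * g) b = Poly_Mapping.lookup g (b - p)"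
proof -
  have "Poly_Mapping.lookup (Poly_Mapping.single p 1 * g) b
     = Sum_any (\<lambda>q. Poly_Mapping.lookup g q when b = p + q)"
    by (simp add: lookup_mult lookup_single when_mult)
  also have "\<dots> = Sum_any (\<lambda>q. Poly_Mapping.lookup g q when q = b - p)"
    by (rule Sum_any.cong) (auto simp: when_def algebra_simps)
  finally show ?thesis by simp
qed

lemma inner_expvec_diff:
  "u \<bullet> expvec b = u \<bullet> expvec p + u \<bullet> expvec (b - p)"
proof -
  have "expvec (b - p) = expvec b - expvec p" by (simp add: expvec_def vec_eq_iff)
  then show ?thesis by (simp add: inner_diff_right)
qed

lemma lookup_shift_sum:
  fixes G :: "'a::ab_group_add \<Rightarrow> 'a \<Rightarrow>\<^sub>0 'b::semiring_1"
  shows "Poly_Mapping.lookup (\<Sum>p\<in>P. Poly_Mapping.single p 1 * G p) b =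
     (\<Sum>p\<in>P. Poly_Mapping.lookup (G p) (b - p))"
  by (simp add: lookup_sum lookup_single_one_mult)

lemma keys_shift_sum:
  fixes G :: "'a::ab_group_add \<Rightarrow> 'a \<Rightarrow>\<^sub>0 'b::semiring_1"
  assumes "b \<in> Poly_Mapping.keys (\<Sum>p\<in>P. Poly_Mapping.single p 1 * G p)"
  obtains p where "p \<in> P" "b - p \<in> Poly_Mapping.keys (G p)"
proof -
  have "(\<Sum>p\<in>P. Poly_Mapping.lookup (G p) (b - p)) \<noteq> 0"
    using assms by (simp add: lookup_shift_sum in_keys_iff)
  then obtain p where "p \<in> P" "Poly_Mapping.lookup (G p) (b - p) \<noteq> 0"
    by (meson sum.not_neutral_contains_not_neutral)
  then show ?thesis using that by (simp add: in_keys_iff)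
qed

lemma inner_le_shifted_rdeg:
  "b - p \<in> Poly_Mapping.keys g \<Longrightarrow> u \<bullet> expvec b \<le> u \<bullet> expvec p + rdeg u g"
  using rdeg_ge[of "b - p" g u] inner_expvec_diff[of u b p] by simp

text \<open>The top coefficients of the shifted sum come only from summands attaining the maximal
  shifted degree, and these contribute positively: there is no cancellation.\<close>
lemma shift_sum_initial_pos:
  fixes G :: "int ^ 'n::finite \<Rightarrow> 'n laurent" and u :: "real ^ 'n"
  defines "\<phi> \<equiv> \<lambda>p. u \<bullet> expvec p + rdeg u (G p)"
  assumes P: "finite P" "P \<noteq> {}" and G0: "\<forall>p\<in>P. G p \<noteq> 0"
    and pos: "\<forall>p\<in>maximizers \<phi> P. initial_pos u (G p)"
  shows "initial_pos u (\<Sum>p\<in>P. Poly_Mapping.single p 1 * G p)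
    \<and> rdeg u (\<Sum>p\<in>P. Poly_Mapping.single p 1 * G p) = Max (\<phi> ` P)"
proof -
  define F where "F = (\<Sum>p\<in>P. Poly_Mapping.single p 1 * G p)"
  define T where "T = Max (\<phi> ` P)"
  have le_T: "\<phi> p \<le> T" if "p \<in> P" for p using P that by (simp add: T_def)
  have lookup_F: "Poly_Mapping.lookup F b = (\<Sum>p\<in>P. Poly_Mapping.lookup (G p) (b - p))" for b
    by (simp add: F_def lookup_shift_sum)
  have term_le: "u \<bullet> expvec b \<le> \<phi> p" if "b - p \<in> Poly_Mapping.keys (G p)" for b p
    using inner_le_shifted_rdeg[OF that] by (simp add: \<phi>_def)
  have keys_le: "u \<bullet> expvec b \<le> T" if b: "b \<in> Poly_Mapping.keys F" for b
  proof -
    obtain p where "p \<in> P" "b - p \<in> Poly_Mapping.keys (G p)"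
      using b unfolding F_def by (rule keys_shift_sum)
    with term_le le_T show ?thesis by fastforce
  qed
  have term_nonneg: "0 \<le> Poly_Mapping.lookup (G p) (b - p)"
    if "u \<bullet> expvec b = T" "p \<in> P" for b p
  proof (cases "b - p \<in> Poly_Mapping.keys (G p)")
    case True
    then have "\<phi> p = T" using term_le le_T that by force
    then have "p \<in> maximizers \<phi> P" using P that le_T by (simp add: mem_maximizers_iff)
    moreover have "u \<bullet> expvec (b - p) = rdeg u (G p)"
      using \<open>\<phi> p = T\<close> that(1) inner_expvec_diff[of u b p] by (simp add: \<phi>_def)
    ultimately show ?thesis using pos True by (force simp: initial_pos_def)
  qed (simp add: in_keys_iff)
  obtain p0 where p0: "p0 \<in> maximizers \<phi> P" using maximizers_nonempty[OF P] by blast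
  then have "p0 \<in> P" "\<phi> p0 = T" by (auto simp: maximizers_def T_def)
  obtain b0 where b0: "b0 \<in> Poly_Mapping.keys (G p0)" "u \<bullet> expvec b0 = rdeg u (G p0)"
    using rdeg_attained G0 \<open>p0 \<in> P\<close> by blast
  define bT where "bT = b0 + p0"
  have bT: "u \<bullet> expvec bT = T"
    using \<open>\<phi> p0 = T\<close> b0(2) inner_expvec_diff[of u bT p0] by (simp add: bT_def \<phi>_def)
  have "0 < Poly_Mapping.lookup (G p0) (bT - p0)"
    using pos p0 b0 by (simp add: bT_def initial_pos_def)
  then have "0 < Poly_Mapping.lookup F bT"
    unfolding lookup_F using P(1) \<open>p0 \<in> P\<close> term_nonneg[OF bT] by (intro sum_pos2) auto
  then have "bT \<in> Poly_Mapping.keys F" by (simp add: in_keys_iff)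
  then have rdeg_F: "rdeg u F = T" using bT keys_le by (intro rdeg_eqI)
  have "0 < Poly_Mapping.lookup F b" if "b \<in> Poly_Mapping.keys F" "u \<bullet> expvec b = T" for b
    using that term_nonneg by (auto simp: lookup_F in_keys_iff intro!: sum_nonneg
        order.not_eq_order_implies_strict)
  with \<open>bT \<in> Poly_Mapping.keys F\<close> rdeg_F show ?thesis
    unfolding F_def[symmetric] T_def[symmetric] initial_pos_def by auto
qed

lemma admissible_shift_sum:
  fixes G :: "int ^ 'n::finite \<Rightarrow> 'k::finite \<Rightarrow> 'n laurent" and u :: "real ^ 'n"
  defines "\<phi> \<equiv> \<lambda>i p. u \<bullet> expvec p + rdeg u (G p i)"
  assumes P: "finite P" "P \<noteq> {}" and G0: "\<forall>p\<in>P. \<forall>i. G p i \<noteq> 0"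
    and adm: "\<And>i p. p \<in> maximizers (\<phi> i) P \<Longrightarrow> admissible I J a (G p) u"
  shows "admissible I J a (\<lambda>i. \<Sum>p\<in>P. Poly_Mapping.single p 1 * G p i) u"
proof -
  define f where "f i = (\<Sum>p\<in>P. Poly_Mapping.single p 1 * G p i)" for i
  have f: "initial_pos u (f i) \<and> rdeg u (f i) = Max (\<phi> i ` P)" for i
    unfolding f_def \<phi>_def using P G0 adm[where i = i]
    by (intro shift_sum_initial_pos) (auto simp: admissible_def \<phi>_def)
  have "I \<noteq> {}"
    using maximizers_nonempty[OF P] adm by (fastforce simp: admissible_def maximizers_def)
  then obtain pi where pi: "pi \<in> maximizers (\<lambda>(p, i). \<phi> i p) (P \<times> I)"
    using maximizers_nonempty[of "P \<times> I"] P by fastforce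
  obtain p i0 where "pi = (p, i0)" by fastforce
  with pi have p: "p \<in> P" "i0 \<in> I" and top: "\<And>q j. q \<in> P \<Longrightarrow> j \<in> I \<Longrightarrow> \<phi> j q \<le> \<phi> i0 p"
    using P by (auto simp: mem_maximizers_iff)
  then have "admissible I J a (G p) u"
    by (intro adm[where i = i0]) (simp add: P mem_maximizers_iff)
  then obtain i where i: "i \<in> Oset a u \<union> J" "i \<in> maximizers (\<lambda>i. rdeg u (G p i)) I"
    by (auto simp: admissible_def)
  then have "\<phi> i0 p \<le> \<phi> i p" using p by (simp add: mem_maximizers_iff \<phi>_def)
  also have "\<dots> \<le> rdeg u (f i)" using f[of i] P p by simp
  finally have "rdeg u (f j) \<le> rdeg u (f i)" if "j \<in> I" for j
    using f[of j] top[OF _ that] Max_in[of "\<phi> j ` P"] P by fastforce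
  with i f show ?thesis
    unfolding f_def[symmetric] by (auto simp: admissible_def mem_maximizers_iff)
qed

section \<open>Lattice points in a thin annulus\<close>

definition lattice_annulus :: "real \<Rightarrow> real \<Rightarrow> (int ^ 'n::finite) set" where
  "lattice_annulus R d = {p. R - d \<le> norm (expvec p) \<and> norm (expvec p) \<le> R + d}"

lemma finite_bounded_intvec: "finite {p :: int ^ 'n::finite. \<forall>i. \<bar>p $ i\<bar> \<le> m}"
proof -
  have "vec_nth ` {p :: int ^ 'n. \<forall>i. \<bar>p $ i\<bar> \<le> m} \<subseteq> PiE UNIV (\<lambda>_. {-m..m})"
    by (auto simp: PiE_def extensional_def abs_le_iff) (metis minus_le_iff)
  then have "finite (vec_nth ` {p :: int ^ 'n. \<forall>i. \<bar>p $ i\<bar> \<le> m})"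
    by (rule finite_subset) (intro finite_PiE, auto)
  moreover have "inj (vec_nth :: int ^ 'n \<Rightarrow> _)" by (simp add: inj_def vec_eq_iff)
  ultimately show ?thesis by (meson finite_imageD inj_on_subset subset_UNIV)
qed

lemma finite_lattice_annulus: "finite (lattice_annulus R d)"
proof (rule finite_subset[OF _ finite_bounded_intvec[of "\<lceil>R + d\<rceil>"]], safe)
  fix p :: "int ^ 'a" and i assume "p \<in> lattice_annulus R d"
  then have "\<bar>expvec p $ i\<bar> \<le> R + d"
    using component_le_norm_cart[of "expvec p" i] by (simp add: lattice_annulus_def)
  then have "real_of_int \<bar>p $ i\<bar> \<le> R + d" by (simp add: expvec_def)
  then show "\<bar>p $ i\<bar> \<le> \<lceil>R + d\<rceil>" by (metis ceiling_mono ceiling_of_int)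
qed

lemma norm_expvec_round_le:
  fixes x :: "real ^ 'n::finite"
  shows "norm (expvec (\<chi> j. round (x $ j)) - x) \<le> real CARD('n)"
proof -
  have "norm (expvec (\<chi> j. round (x $ j)) - x) \<le> (\<Sum>j\<in>UNIV. \<bar>(expvec (\<chi> j. round (x $ j)) - x) $ j\<bar>)"
    by (rule norm_le_l1_cart)
  also have "\<dots> \<le> (\<Sum>j\<in>(UNIV :: 'n set). 1)"
  proof (intro sum_mono)
    fix j
    show "\<bar>(expvec (\<chi> j. round (x $ j)) - x) $ j\<bar> \<le> 1"
      using of_int_round_abs_le[of "x $ j"] by (simp add: expvec_def)
  qed
  finally show ?thesis by simp
qed

text \<open>Rounding R u/|u| gives a lattice point of the annulus of width CARD('n) far along u.\<close>
lemma lattice_annulus_point_along: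
  fixes u :: "real ^ 'n::finite"
  defines "d \<equiv> real CARD('n)"
  assumes "u \<noteq> 0" "0 \<le> R"
  obtains p where "p \<in> lattice_annulus R d" "norm u * (R - d) \<le> u \<bullet> expvec p"
proof
  define x where "x = (R / norm u) *\<^sub>R u"
  define p :: "int ^ 'n" where "p = (\<chi> j. round (x $ j))"
  have err: "norm (expvec p - x) \<le> d" unfolding p_def d_def by (rule norm_expvec_round_le)
  have "\<bar>norm (expvec p) - \<bar>R\<bar>\<bar> \<le> d"
    using norm_triangle_ineq3[of "expvec p" x] err assms by (simp add: x_def)
  then show "p \<in> lattice_annulus R d" using assms(3) by (auto simp: lattice_annulus_def)
  have "\<bar>u \<bullet> (expvec p - x)\<bar> \<le> norm u * d"
    using Cauchy_Schwarz_ineq2[of u "expvec p - x"] err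
    by (meson mult_left_mono norm_ge_zero order_trans)
  moreover have "u \<bullet> x = norm u * R"
    using assms by (simp add: x_def power2_norm_eq_inner[symmetric] power2_eq_square)
  ultimately show "norm u * (R - d) \<le> u \<bullet> expvec p"
    by (simp add: inner_diff_right right_diff_distrib abs_le_iff)
qed

lemma inner_le_if_directions_far:
  fixes u w :: "real ^ 'n::finite"
  assumes "u \<noteq> 0" "w \<noteq> 0" "e > 0" "R - d \<le> norm w" "norm w \<le> R + d"
    and far: "e \<le> dist (w /\<^sub>R norm w) (u /\<^sub>R norm u)"
  shows "u \<bullet> w \<le> norm u * (R + d - (R - d) * e\<^sup>2 / 2)"
proof -
  define uh where "uh = u /\<^sub>R norm u"
  define wh where "wh = w /\<^sub>R norm w"
  have "uh \<bullet> uh = 1" "wh \<bullet> wh = 1" using assms(1,2)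
    by (simp_all add: uh_def wh_def power2_norm_eq_inner[symmetric] power2_eq_square)
  then have "(dist wh uh)\<^sup>2 = 2 - 2 * (uh \<bullet> wh)"
    by (simp add: dist_norm power2_norm_eq_inner inner_diff_left inner_diff_right inner_commute)
  moreover have "e\<^sup>2 \<le> (dist wh uh)\<^sup>2" using far assms(3) by (simp add: uh_def wh_def power_mono)
  ultimately have cos: "uh \<bullet> wh \<le> 1 - e\<^sup>2 / 2" by simp
  have "u \<bullet> w = norm u * (norm w * (uh \<bullet> wh))" using assms(1,2)
    by (simp add: uh_def wh_def inner_scaleR_left inner_scaleR_right field_simps)
  also have "norm w * (uh \<bullet> wh) \<le> norm w - norm w * e\<^sup>2 / 2"
    using mult_left_mono[OF cos, of "norm w"] by (simp add: algebra_simps)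
  also have "\<dots> \<le> R + d - (R - d) * e\<^sup>2 / 2"
    using mult_right_mono[OF assms(4), of "e\<^sup>2"] assms(5) by simp
  finally show ?thesis by (simp add: mult_left_mono)
qed

text \<open>The radius R is chosen so that the linear term u\<bullet>p beats perturbations of size |u|C.\<close>
lemma lattice_annulus_maximizer_direction:
  fixes u :: "real ^ 'n::finite" and \<psi> :: "int ^ 'n \<Rightarrow> real"
  assumes d_def: "d = real CARD('n)" and R_def: "R = d + (4 * d + 4 * C + 1) / e\<^sup>2"
    and "u \<noteq> 0" "e > 0" "C \<ge> 0"
    and bound: "\<And>p. p \<in> lattice_annulus R d \<Longrightarrow> \<bar>\<psi> p\<bar> \<le> norm u * C"
    and max: "p \<in> maximizers (\<lambda>p. u \<bullet> expvec p + \<psi> p) (lattice_annulus R d)"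
  shows "dist (expvec p /\<^sub>R norm (expvec p)) (u /\<^sub>R norm u) < e"
proof (rule ccontr)
  assume far: "\<not> ?thesis"
  have "e\<^sup>2 > 0" "d \<ge> 0" using assms(4) by (simp_all add: d_def)
  then have Rd: "(R - d) * e\<^sup>2 = 4 * d + 4 * C + 1" "R - d > 0"
    using assms(5) by (simp_all add: R_def add_pos_nonneg)
  have p: "p \<in> lattice_annulus R d" using max by (simp add: maximizers_def)
  then have p0: "expvec p \<noteq> 0" using Rd(2) by (auto simp: lattice_annulus_def)
  have "0 \<le> R" using Rd(2) \<open>d \<ge> 0\<close> by linarith
  then obtain q where q: "q \<in> lattice_annulus R d" "norm u * (R - d) \<le> u \<bullet> expvec q"
    using lattice_annulus_point_along[OF assms(3)] unfolding d_def by blast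
  have "u \<bullet> expvec p \<le> norm u * (R + d - (R - d) * e\<^sup>2 / 2)"
    using p p0 far assms(3,4) by (intro inner_le_if_directions_far) (auto simp: lattice_annulus_def)
  also have "R + d - (R - d) * e\<^sup>2 / 2 = R - d - 2 * C - 1 / 2"
    using Rd(1) by (simp add: field_simps)
  finally have "u \<bullet> expvec p \<le> norm u * (R - d - 2 * C - 1 / 2)" .
  moreover have "norm u * (R - d - 2 * C - 1 / 2) + norm u * C < norm u * (R - d) - norm u * C"
    using assms(3) by (simp add: algebra_simps)
  moreover have "\<psi> p \<le> norm u * C" "- (norm u * C) \<le> \<psi> q"
    using bound[OF p] bound[OF q(1)] by (simp_all add: abs_le_iff)
  moreover have "u \<bullet> expvec q + \<psi> q \<le> u \<bullet> expvec p + \<psi> p"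
    using max q(1) by (simp add: mem_maximizers_iff finite_lattice_annulus)
  ultimately show False using q(2) by linarith
qed

section \<open>Gluing\<close>

lemma compact_lebesgue_cover:
  fixes S :: "'a::metric_space set"
  assumes "compact S" "\<forall>x\<in>S. 0 < r x"
  obtains F e where "finite F" "F \<subseteq> S" "0 < e" "\<forall>x\<in>S. \<exists>v\<in>F. ball x e \<subseteq> ball v (r v)"
proof -
  obtain F where F: "F \<subseteq> S" "finite F" "S \<subseteq> (\<Union>v\<in>F. ball v (r v))"
    using compactE_image[OF assms(1), of S "\<lambda>v. ball v (r v)"] assms(2) by force
  obtain e where "0 < e" "\<And>x. x \<in> S \<Longrightarrow> \<exists>B\<in>(\<lambda>v. ball v (r v)) ` F. ball x e \<subseteq> B"
    by (rule Heine_Borel_lemma[OF assms(1) F(3)]) auto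
  then have "\<forall>x\<in>S. \<exists>v\<in>F. ball x e \<subseteq> ball v (r v)" by blast
  with F \<open>0 < e\<close> that show ?thesis by blast
qed

lemma admissible_finite_cover:
  fixes fs :: "real ^ 'n::finite \<Rightarrow> 'k::finite \<Rightarrow> 'n laurent"
  assumes local: "\<And>v. v \<noteq> 0 \<Longrightarrow>
    \<exists>\<epsilon>>0. \<forall>y t. dist y v < \<epsilon> \<longrightarrow> 0 < t \<longrightarrow> admissible I J a (fs v) (t *\<^sub>R y)"
  obtains F e where "finite F" "F \<subseteq> sphere 0 1" "0 < e"
    "\<And>x. norm x = 1 \<Longrightarrow>
       \<exists>v\<in>F. \<forall>y t. dist y x < e \<longrightarrow> 0 < t \<longrightarrow> admissible I J a (fs v) (t *\<^sub>R y)"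
proof -
  obtain es where es: "\<And>v. v \<noteq> 0 \<Longrightarrow> 0 < es v \<and>
      (\<forall>y t. dist y v < es v \<longrightarrow> 0 < t \<longrightarrow> admissible I J a (fs v) (t *\<^sub>R y))"
    using local by metis
  have "\<forall>x\<in>sphere 0 1. 0 < es x"
  proof
    fix x :: "real ^ 'n" assume "x \<in> sphere 0 1"
    then have "x \<noteq> 0" by auto
    then show "0 < es x" using es by blast
  qed
  then obtain F e where F: "finite F" "F \<subseteq> sphere 0 1" "0 < e"
      and cover: "\<forall>x\<in>sphere 0 1. \<exists>v\<in>F. ball x e \<subseteq> ball v (es v)"
    by (rule compact_lebesgue_cover[OF compact_sphere])
  have "\<exists>v\<in>F. \<forall>y t. dist y x < e \<longrightarrow> 0 < t \<longrightarrow> admissible I J a (fs v) (t *\<^sub>R y)"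
    if x: "norm x = 1" for x
  proof -
    have "x \<in> sphere 0 1" using x by simp
    then obtain v where v: "v \<in> F" "ball x e \<subseteq> ball v (es v)" using cover by blast
    then have "dist y v < es v" if "dist y x < e" for y using that by (auto simp: dist_commute)
    moreover have "v \<noteq> 0" using v(1) F(2) by auto
    ultimately show ?thesis using v(1) es by blast
  qed
  with F that show ?thesis by blast
qed

lemma admissible_glued:
  fixes fs :: "real ^ 'n::finite \<Rightarrow> 'k::finite \<Rightarrow> 'n laurent"
  assumes "finite F" "\<forall>v\<in>F. \<forall>i. fs v i \<noteq> 0" "e > 0"
    and near: "\<And>x. norm x = 1 \<Longrightarrow>
       \<exists>v\<in>F. \<forall>y t. dist y x < e \<longrightarrow> 0 < t \<longrightarrow> admissible I J a (fs v) (t *\<^sub>R y)"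
  obtains P :: "(int ^ 'n) set" and sel :: "int ^ 'n \<Rightarrow> real ^ 'n" where "finite P" "sel ` P \<subseteq> F"
    "\<And>u. u \<noteq> 0 \<Longrightarrow> admissible I J a (\<lambda>i. \<Sum>p\<in>P. Poly_Mapping.single p 1 * fs (sel p) i) u"
proof
  define C where "C = (\<Sum>b\<in>(\<Union>v\<in>F. \<Union>i. Poly_Mapping.keys (fs v i)). norm (expvec b))"
  have C: "norm (expvec b) \<le> C" if "v \<in> F" "b \<in> Poly_Mapping.keys (fs v i)" for v i b
    unfolding C_def using that assms(1) by (intro member_le_sum) auto
  have "C \<ge> 0" unfolding C_def by (simp add: sum_nonneg)
  define d where "d = real CARD('n)"
  define R where "R = d + (4 * d + 4 * C + 1) / e\<^sup>2"
  define P :: "(int ^ 'n) set" where "P = lattice_annulus R d"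
  have "R - d > 0" using \<open>e > 0\<close> \<open>C \<ge> 0\<close> by (simp add: R_def d_def add_pos_nonneg)
  then have P0: "expvec p \<noteq> 0" if "p \<in> P" for p using that by (auto simp: P_def lattice_annulus_def)
  define dir where "dir p = expvec p /\<^sub>R norm (expvec p)" for p :: "int ^ 'n"
  define sel where "sel p = (SOME v. v \<in> F \<and> (\<forall>y t. dist y (dir p) < e \<longrightarrow> 0 < t \<longrightarrow>
      admissible I J a (fs v) (t *\<^sub>R y)))" for p :: "int ^ 'n"
  have sel: "sel p \<in> F \<and> (\<forall>y t. dist y (dir p) < e \<longrightarrow> 0 < t \<longrightarrow>
      admissible I J a (fs (sel p)) (t *\<^sub>R y))" if "p \<in> P" for p
  proof -
    have "norm (dir p) = 1" using P0[OF that] by (simp add: dir_def)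
    from near[OF this] show ?thesis
      unfolding sel_def Bex_def by (rule someI_ex)
  qed
  then have sel_adm: "admissible I J a (fs (sel p)) (t *\<^sub>R y)"
    if "p \<in> P" "dist y (dir p) < e" "0 < t" for p y t
    using that by blast
  show "finite P" by (simp add: P_def finite_lattice_annulus)
  show "sel ` P \<subseteq> F" using sel by blast
  show "admissible I J a (\<lambda>i. \<Sum>p\<in>P. Poly_Mapping.single p 1 * fs (sel p) i) u" if "u \<noteq> 0" for u
  proof (rule admissible_shift_sum)
    show "finite P" by fact
    have "0 \<le> R" using \<open>R - d > 0\<close> by (simp add: d_def)
    then show "P \<noteq> {}" using lattice_annulus_point_along[OF that] by (auto simp: P_def d_def)
    show "\<forall>p\<in>P. \<forall>i. fs (sel p) i \<noteq> 0" using sel assms(2) by blast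
  next
    fix i p
    assume max: "p \<in> maximizers (\<lambda>p. u \<bullet> expvec p + rdeg u (fs (sel p) i)) P"
    have "\<bar>rdeg u (fs (sel q) i)\<bar> \<le> norm u * C" if "q \<in> P" for q
    proof -
      have "sel q \<in> F" using sel[OF that] by blast
      then show ?thesis using assms(2) C by (intro abs_rdeg_le) blast+
    qed
    then have "dist (dir p) (u /\<^sub>R norm u) < e"
      using lattice_annulus_maximizer_direction[OF d_def R_def that \<open>e > 0\<close> \<open>C \<ge> 0\<close>,
          where \<psi> = "\<lambda>q. rdeg u (fs (sel q) i)"] max
      unfolding P_def dir_def by blast
    then have "dist (u /\<^sub>R norm u) (dir p) < e" by (simp add: dist_commute)
    moreover have "p \<in> P" using max by (simp add: maximizers_def)
    ultimately have "admissible I J a (fs (sel p)) (norm u *\<^sub>R (u /\<^sub>R norm u))"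
      using sel that by (intro sel_adm) simp_all
    then show "admissible I J a (fs (sel p)) u" using that by simp
  qed
qed

lemma submodule_sum:
  assumes M: "is_submodule M" and "finite P" "\<forall>p\<in>P. h p \<in> M"
  shows "(\<lambda>i. \<Sum>p\<in>P. c p * h p i) \<in> M"
  using assms(2,3)
proof (induction P rule: finite_induct)
  case empty then show ?case using M by (simp add: is_submodule_def)
next
  case (insert p P)
  then have "(\<lambda>i. c p * h p i) \<in> M" "(\<lambda>i. \<Sum>p\<in>P. c p * h p i) \<in> M"
    using M by (auto simp: is_submodule_def)
  then show ?case using M insert by (simp add: is_submodule_def)
qed

theorem mainTheorem12:
  fixes M :: "('k::finite \<Rightarrow> ('n::finite) laurent) set"
    and a :: "'k \<Rightarrow> int ^ 'n"
    and I J :: "'k set"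
  assumes "is_submodule M"
    and "\<forall>v :: real ^ 'n. v \<noteq> 0 \<longrightarrow>
          (\<exists>fv \<in> M. (\<forall>i. linitv v fv i \<in> Aplus) \<and>
             (\<forall>w :: real ^ 'n. w \<noteq> 0 \<longrightarrow>
                (Oset a w \<union> (Oset a v \<union> J)) \<inter> Mset w (Mset v I fv) (linitv v fv) \<noteq> {}))"
  shows "\<exists>f \<in> M. (\<forall>v :: real ^ 'n. v \<noteq> 0 \<longrightarrow> (\<forall>i. linitv v f i \<in> Aplus)) \<and>
           (\<forall>v :: real ^ 'n. v \<noteq> 0 \<longrightarrow> (Oset a v \<union> J) \<inter> Mset v I f \<noteq> {})"
proof -
  have "\<forall>v. \<exists>fv. v \<noteq> 0 \<longrightarrow> fv \<in> M \<and> (\<forall>i. initial_pos v (fv i)) \<and>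
      (\<forall>w. w \<noteq> 0 \<longrightarrow> (Oset a w \<union> (Oset a v \<union> J)) \<inter> Mset w (Mset v I fv) (linitv v fv) \<noteq> {})"
    using assms(2) unfolding linitv_in_Aplus_iff by blast
  then obtain fs where fs: "\<And>v. v \<noteq> 0 \<Longrightarrow> fs v \<in> M \<and> (\<forall>i. initial_pos v (fs v i)) \<and>
      (\<forall>w. w \<noteq> 0 \<longrightarrow> (Oset a w \<union> (Oset a v \<union> J)) \<inter> Mset w (Mset v I (fs v)) (linitv v (fs v)) \<noteq> {})"
    by metis
  have "\<exists>\<epsilon>>0. \<forall>y t. dist y v < \<epsilon> \<longrightarrow> 0 < t \<longrightarrow> admissible I J a (fs v) (t *\<^sub>R y)"
    if "v \<noteq> 0" for v
    using admissible_near[of v "fs v"] fs[OF that] that by blast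
  from admissible_finite_cover[OF this]
  obtain F e where F: "finite F" "F \<subseteq> sphere 0 1" "0 < e"
    and near: "\<And>x. norm x = 1 \<Longrightarrow>
      \<exists>v\<in>F. \<forall>y t. dist y x < e \<longrightarrow> 0 < t \<longrightarrow> admissible I J a (fs v) (t *\<^sub>R y)"
    by blast
  have F0: "v \<in> F \<Longrightarrow> v \<noteq> 0" for v using F(2) by auto
  have fs0: "\<forall>v\<in>F. \<forall>i. fs v i \<noteq> 0" using fs F0 unfolding initial_pos_def by blast
  obtain P sel where P: "finite P" "sel ` P \<subseteq> F"
      and adm: "\<And>u. u \<noteq> 0 \<Longrightarrow> admissible I J a (\<lambda>i. \<Sum>p\<in>P. Poly_Mapping.single p 1 * fs (sel p) i) u"
    using admissible_glued[OF F(1) fs0 F(3) near] by blast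
  have "(\<lambda>i. \<Sum>p\<in>P. Poly_Mapping.single p 1 * fs (sel p) i) \<in> M"
    using P fs F0 by (intro submodule_sum[OF assms(1)]) auto
  with adm show ?thesis unfolding admissible_iff by blast
qed

end
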